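(* Let $G$ be a finite group of odd order $n$ and let $Z_2 = \{0,1\}$ be the near-ring with addition modulo $2$ and multiplication $a\cdot b = a$ for all $a,b \in Z_2$. Then the group near-ring $Z_2G$ has a subnear-ring $S \neq \{0\}$ which is a Boolean near-ring (i.e. $x\cdot x = x$ for all $x \in S$).
   Context: The group near-ring $Z_2G$ consists of all formal sums $\sum_{g \in G} \alpha(g) g$ with $\alpha(g) \in Z_2$; addition is coefficientwise, and the product of $\alpha = \sum_{g \in \operatorname{supp}\alpha} \alpha(g) g$ and $\beta = \sum_{h \in \operatorname{supp}\beta} \beta(h) h$ (where $\operatorname{supp}$ denotes the set of group elements with nonzero coefficient) is $\sum_{g \in \operatorname{supp}\alpha,\, h\in\operatorname{supp}\beta} (\alpha(g)\cdot\beta(h))\, gh$, like terms being collected by addition in $Z_2$. A subnear-ring is a subset that is a subgroup under addition and closed under multiplication. *)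

theory Defs
  imports "HOL-Algebra.Group"
begin

text \<open>The near-ring Z2 = {0,1}, represented by bool (False = 0, True = 1):
  addition modulo 2 and multiplication a * b = a.\<close>

definition z2_add :: "bool \<Rightarrow> bool \<Rightarrow> bool" where
  "z2_add a b = (a \<noteq> b)"

definition z2_neg :: "bool \<Rightarrow> bool" where
  "z2_neg a = a"

definition z2_mult :: "bool \<Rightarrow> bool \<Rightarrow> bool" where
  "z2_mult a b = a"

definition z2_sum :: "('i \<Rightarrow> bool) \<Rightarrow> 'i set \<Rightarrow> bool" where
  "z2_sum f I = odd (card {i \<in> I. f i})"

text \<open>Elements of the group near-ring Z2G: coefficient functions on carrier G,
  zero outside the carrier.\<close>
definition gnr_elems :: "('a, 'b) monoid_scheme \<Rightarrow> ('a \<Rightarrow> bool) set" where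
  "gnr_elems G = {\<alpha>. \<forall>x. x \<notin> carrier G \<longrightarrow> \<not> \<alpha> x}"

definition gnr_supp :: "('a, 'b) monoid_scheme \<Rightarrow> ('a \<Rightarrow> bool) \<Rightarrow> 'a set" where
  "gnr_supp G \<alpha> = {g \<in> carrier G. \<alpha> g}"

definition gnr_zero :: "'a \<Rightarrow> bool" where
  "gnr_zero = (\<lambda>x. False)"

definition gnr_add :: "('a, 'b) monoid_scheme \<Rightarrow> ('a \<Rightarrow> bool) \<Rightarrow> ('a \<Rightarrow> bool) \<Rightarrow> ('a \<Rightarrow> bool)" where
  "gnr_add G \<alpha> \<beta> = (\<lambda>x. if x \<in> carrier G then z2_add (\<alpha> x) (\<beta> x) else False)"

definition gnr_neg :: "('a, 'b) monoid_scheme \<Rightarrow> ('a \<Rightarrow> bool) \<Rightarrow> ('a \<Rightarrow> bool)" where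
  "gnr_neg G \<alpha> = (\<lambda>x. if x \<in> carrier G then z2_neg (\<alpha> x) else False)"

text \<open>Product: sum over g in supp alpha, h in supp beta of (alpha(g) * beta(h)) gh.\<close>
definition gnr_mult :: "('a, 'b) monoid_scheme \<Rightarrow> ('a \<Rightarrow> bool) \<Rightarrow> ('a \<Rightarrow> bool) \<Rightarrow> ('a \<Rightarrow> bool)" where
  "gnr_mult G \<alpha> \<beta> = (\<lambda>x. if x \<in> carrier G then
      z2_sum (\<lambda>(g, h). z2_mult (\<alpha> g) (\<beta> h))
             {(g, h). g \<in> gnr_supp G \<alpha> \<and> h \<in> gnr_supp G \<beta> \<and> g \<otimes>\<^bsub>G\<^esub> h = x}
    else False)"

definition gnr_subnear_ring :: "('a, 'b) monoid_scheme \<Rightarrow> ('a \<Rightarrow> bool) set \<Rightarrow> bool" where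
  "gnr_subnear_ring G S \<longleftrightarrow>
     S \<subseteq> gnr_elems G \<and> gnr_zero \<in> S \<and>
     (\<forall>\<alpha>\<in>S. \<forall>\<beta>\<in>S. gnr_add G \<alpha> \<beta> \<in> S) \<and>
     (\<forall>\<alpha>\<in>S. gnr_neg G \<alpha> \<in> S) \<and>
     (\<forall>\<alpha>\<in>S. \<forall>\<beta>\<in>S. gnr_mult G \<alpha> \<beta> \<in> S)"

definition gnr_boolean :: "('a, 'b) monoid_scheme \<Rightarrow> ('a \<Rightarrow> bool) set \<Rightarrow> bool" where
  "gnr_boolean G S \<longleftrightarrow> (\<forall>x\<in>S. gnr_mult G x x = x)"

end

theory Submission
  imports Defs
begin

text \<open>The sum \<open>e\<close> of all group elements satisfies \<open>e e = |G| e\<close>, because every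
  \<open>x \<in> G\<close> has exactly \<open>|G|\<close> factorisations \<open>x = g h\<close>. Over \<open>Z\<^sub>2\<close> and for odd \<open>|G|\<close>
  this makes \<open>e\<close> idempotent, and then \<open>{0, e}\<close> is a Boolean subnear-ring, since
  \<open>e + e = 0\<close> and \<open>0\<close> is absorbing.\<close>

lemma (in group) card_factorizations:
  assumes "x \<in> carrier G"
  shows "card {(g, h). g \<in> carrier G \<and> h \<in> carrier G \<and> g \<otimes> h = x} = card (carrier G)"
proof -
  have "bij_betw (\<lambda>h. (x \<otimes> inv h, h)) (carrier G)
     {(g, h). g \<in> carrier G \<and> h \<in> carrier G \<and> g \<otimes> h = x}"
  proof (rule bij_betw_imageI)
    show "inj_on (\<lambda>h. (x \<otimes> inv h, h)) (carrier G)" by (auto simp: inj_on_def)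
    have "g = x \<otimes> inv h" if "g \<in> carrier G" "h \<in> carrier G" "g \<otimes> h = x" for g h
      using that assms inv_solve_right by blast
    then show "(\<lambda>h. (x \<otimes> inv h, h)) ` carrier G
        = {(g, h). g \<in> carrier G \<and> h \<in> carrier G \<and> g \<otimes> h = x}"
      using assms by (auto simp: m_assoc)
  qed
  then show ?thesis by (simp add: bij_betw_same_card)
qed

definition gnr_total :: "('a, 'b) monoid_scheme \<Rightarrow> 'a \<Rightarrow> bool" where
  "gnr_total G = (\<lambda>x. x \<in> carrier G)"

lemma gnr_total_in_elems: "gnr_total G \<in> gnr_elems G"
  by (simp add: gnr_total_def gnr_elems_def)

lemma gnr_total_neq_zero: "monoid G \<Longrightarrow> gnr_total G \<noteq> gnr_zero"
  unfolding gnr_total_def gnr_zero_def by (metis monoid.one_closed)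

text \<open>For infinite \<open>G\<close> both sides vanish, as \<open>card\<close> is then \<open>0\<close>.\<close>

lemma gnr_mult_total_self:
  assumes "group G"
  shows "gnr_mult G (gnr_total G) (gnr_total G)
    = (if odd (card (carrier G)) then gnr_total G else gnr_zero)"
proof
  fix x
  show "gnr_mult G (gnr_total G) (gnr_total G) x
    = (if odd (card (carrier G)) then gnr_total G else gnr_zero) x"
  proof (cases "x \<in> carrier G")
    case True
    have "{p \<in> {(g, h). g \<in> gnr_supp G (gnr_total G) \<and> h \<in> gnr_supp G (gnr_total G)
                         \<and> g \<otimes>\<^bsub>G\<^esub> h = x}.
             (\<lambda>(g, h). z2_mult (gnr_total G g) (gnr_total G h)) p}
          = {(g, h). g \<in> carrier G \<and> h \<in> carrier G \<and> g \<otimes>\<^bsub>G\<^esub> h = x}"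
      by (auto simp: gnr_supp_def gnr_total_def z2_mult_def)
    with True group.card_factorizations[OF assms True] show ?thesis
      by (simp add: gnr_mult_def z2_sum_def gnr_total_def gnr_zero_def)
  qed (simp add: gnr_mult_def gnr_total_def gnr_zero_def)
qed

lemma gnr_add_self: "gnr_add G \<alpha> \<alpha> = gnr_zero"
  by (simp add: gnr_add_def z2_add_def gnr_zero_def)

lemma gnr_add_zero_left: "\<alpha> \<in> gnr_elems G \<Longrightarrow> gnr_add G gnr_zero \<alpha> = \<alpha>"
  by (auto simp: gnr_add_def z2_add_def gnr_zero_def gnr_elems_def)

lemma gnr_add_zero_right: "\<alpha> \<in> gnr_elems G \<Longrightarrow> gnr_add G \<alpha> gnr_zero = \<alpha>"
  by (auto simp: gnr_add_def z2_add_def gnr_zero_def gnr_elems_def)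

lemma gnr_neg_eq_self: "\<alpha> \<in> gnr_elems G \<Longrightarrow> gnr_neg G \<alpha> = \<alpha>"
  by (auto simp: gnr_neg_def z2_neg_def gnr_elems_def)

lemma gnr_mult_zero_left: "gnr_mult G gnr_zero \<beta> = gnr_zero"
  by (auto simp: gnr_mult_def gnr_zero_def gnr_supp_def z2_sum_def)

lemma gnr_mult_zero_right: "gnr_mult G \<alpha> gnr_zero = gnr_zero"
  by (auto simp: gnr_mult_def gnr_zero_def gnr_supp_def z2_sum_def)

lemma gnr_zero_in_elems: "gnr_zero \<in> gnr_elems G"
  by (simp add: gnr_zero_def gnr_elems_def)

lemma gnr_subnear_ring_idempotent:
  assumes "\<alpha> \<in> gnr_elems G" and "gnr_mult G \<alpha> \<alpha> = \<alpha>"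
  shows "gnr_subnear_ring G {gnr_zero, \<alpha>}" and "gnr_boolean G {gnr_zero, \<alpha>}"
  using assms gnr_zero_in_elems[of G] gnr_neg_eq_self[of gnr_zero G]
  by (auto simp: gnr_subnear_ring_def gnr_boolean_def gnr_add_self gnr_add_zero_left
      gnr_add_zero_right gnr_neg_eq_self gnr_mult_zero_left gnr_mult_zero_right)

theorem theorem3p5p6:
  fixes G :: "('a, 'b) monoid_scheme"
  assumes "group G" and "finite (carrier G)" and "odd (card (carrier G))"
  shows "\<exists>S. gnr_subnear_ring G S \<and> S \<noteq> {gnr_zero} \<and> gnr_boolean G S"
proof -
  let ?e = "gnr_total G"
  have "gnr_mult G ?e ?e = ?e"
    using gnr_mult_total_self[OF assms(1)] assms(3) by simp
  then have "gnr_subnear_ring G {gnr_zero, ?e}" and "gnr_boolean G {gnr_zero, ?e}"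
    using gnr_subnear_ring_idempotent gnr_total_in_elems by blast+
  moreover have "{gnr_zero, ?e} \<noteq> {gnr_zero}"
    using gnr_total_neq_zero[OF group.is_monoid[OF assms(1)]] by auto
  ultimately show ?thesis by blast
qed

end
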